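(* For every natural number $n$ and every permutation $\sigma$, $$\sum_{\pi\in\mathcal{S}_n(\sigma)}t^{\mathrm{des}(\pi)}=\sum_{[y]\in[\mathrm{Cay}_n][\sigma^{-1}]}t^{\log_2|[y]|}.$$
   Context: $\mathrm{Cay}_n$ is the set of Cayley permutations of length $n$ (words of positive integers in which every integer from $1$ to the maximum occurs). Containment $y\le x$: indices $i_1<\dots<i_k$ ($k$ the length of $y$) with $x(i_s)<x(i_t)\iff y(s)<y(t)$ and $x(i_s)=x(i_t)\iff y(s)=y(t)$. $\mathcal{S}_n(\sigma)$ is the set of permutations of $[n]$ avoiding $\sigma$, and $\mathrm{des}(\pi)=|\{i:\pi(i)>\pi(i+1)\}|$. For $x\in\mathrm{Cay}_n$, $\gamma(x)$ is the permutation obtained by sorting the pairs $(x(i),i)$ increasingly by first coordinate, ties by decreasing second coordinate, and reading the second coordinates. $x\sim y$ iff $\gamma(x)=\gamma(y)$; $[y]$ is the class of $y$ (all its elements have the same length). For classes, $[x]\ge[y]$ iff $x'\ge y'$ for some $x'\in[x]$, $y'\in[y]$. $[\mathrm{Cay}_n][\sigma^{-1}]$ denotes the set of classes $[y]$ with $y\in\mathrm{Cay}_n$ and $[y]\not\ge[\sigma^{-1}]$. $t$ is an indeterminate. *)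

theory Defs
  imports Complex_Main "HOL-Computational_Algebra.Polynomial" "HOL-Library.Product_Lexorder"
begin

text \<open>Words are lists of naturals; positions are 0-based internally, values as in the paper.\<close>

definition Cay :: "nat \<Rightarrow> nat list set" where
  "Cay n = {x. length x = n \<and> (\<exists>m. set x = {1..m})}"

definition Perms :: "nat \<Rightarrow> nat list set" where
  "Perms n = {p. distinct p \<and> set p = {1..n}}"

definition is_perm :: "nat list \<Rightarrow> bool" where
  "is_perm p \<longleftrightarrow> distinct p \<and> set p = {1..length p}"

definition contains :: "nat list \<Rightarrow> nat list \<Rightarrow> bool" where
  "contains x y \<longleftrightarrow> (\<exists>is. length is = length y \<and> sorted_wrt (<) is \<and> (\<forall>i\<in>set is. i < length x) \<and>
     (\<forall>s<length y. \<forall>t<length y.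
        (x ! (is ! s) < x ! (is ! t) \<longleftrightarrow> y ! s < y ! t) \<and>
        (x ! (is ! s) = x ! (is ! t) \<longleftrightarrow> y ! s = y ! t)))"

definition Av :: "nat \<Rightarrow> nat list \<Rightarrow> nat list set" where
  "Av n \<sigma> = {\<pi> \<in> Perms n. \<not> contains \<pi> \<sigma>}"

definition des :: "nat list \<Rightarrow> nat" where
  "des p = card {i. Suc i < length p \<and> p ! i > p ! Suc i}"

definition perm_inv :: "nat list \<Rightarrow> nat list" where
  "perm_inv \<sigma> = map (\<lambda>j. Suc (THE i. i < length \<sigma> \<and> \<sigma> ! i = j)) [1..<Suc (length \<sigma>)]"

definition gamma :: "nat list \<Rightarrow> nat list" where
  "gamma x = map snd (sort_key (\<lambda>(v, i). (v, - int i)) (zip x [1..<Suc (length x)]))"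

definition cay_class :: "nat list \<Rightarrow> nat list set" where
  "cay_class y = {y'. (\<exists>m. set y' = {1..m}) \<and> gamma y' = gamma y}"

definition class_geq :: "nat list set \<Rightarrow> nat list set \<Rightarrow> bool" where
  "class_geq X Y \<longleftrightarrow> (\<exists>x'\<in>X. \<exists>y'\<in>Y. contains x' y')"

definition Cay_classes_avoiding :: "nat \<Rightarrow> nat list \<Rightarrow> nat list set set" where
  "Cay_classes_avoiding n \<tau> = {cay_class y | y. y \<in> Cay n \<and> \<not> class_geq (cay_class y) (cay_class \<tau>)}"

end

(* Gamma maps Cayley permutations onto permutations and sends a permutation to its inverse, so the classes
   in Cay_n are the fibres of gamma over S_n, the fibre over p containing p^-1.  Gamma also
   preserves containment, hence [x] >= [y] iff gamma x contains gamma y, and the classes avoiding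
   [sigma^-1] are the fibres over the sigma-avoiding permutations.  Finally, y lies in the fibre
   over p iff the word y o p is weakly increasing onto some {1..m} and is constant only across
   descents of p; such a word is determined by its set of plateaus, which can be any set of
   descents, so the fibre over p has 2^des(p) elements. *)

theory Submission
  imports Defs "HOL-Library.Multiset"
begin

lemma strict_sorted_nth_less_iff:
  fixes xs :: "'a::linorder list"
  assumes "sorted_wrt (<) xs" "i < length xs" "j < length xs"
  shows "xs ! i < xs ! j \<longleftrightarrow> i < j"
  using assms by (metis linorder_neqE_nat order_less_asym order_less_irrefl sorted_wrt_nth_less)

lemma insort_key_map: "insort_key g (f x) (map f xs) = map f (insort_key (g \<circ> f) x xs)"
  by (induction xs) auto

lemma sort_key_map: "sort_key g (map f xs) = map f (sort_key (g \<circ> f) xs)"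
  by (induction xs) (simp_all add: insort_key_map comp_def)

section \<open>The map gamma\<close>

definition gamma_key :: "nat list \<Rightarrow> nat \<Rightarrow> nat \<times> int" where
  "gamma_key x i = (x ! (i - 1), - int i)"

lemma gamma_key_less_iff:
  "gamma_key x i < gamma_key x j \<longleftrightarrow> x ! (i - 1) < x ! (j - 1) \<or> x ! (i - 1) = x ! (j - 1) \<and> j < i"
  by (auto simp: gamma_key_def less_prod_def)

lemma inj_on_gamma_key: "inj_on (gamma_key x) A"
  by (auto intro: inj_onI simp: gamma_key_def)

lemma gamma_conv_sort_key: "gamma x = sort_key (gamma_key x) [1..<Suc (length x)]"
proof -
  have "zip x [1..<Suc (length x)] = map (\<lambda>i. (x ! (i - 1), i)) [1..<Suc (length x)]"
    by (rule nth_equalityI) (simp_all del: upt_Suc)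
  then show ?thesis
    by (simp add: gamma_def sort_key_map comp_def gamma_key_def[abs_def] del: upt_Suc)
qed

lemma length_gamma [simp]: "length (gamma x) = length x"
  and set_gamma: "set (gamma x) = {1..length x}"
  and distinct_gamma: "distinct (gamma x)"
  by (auto simp: gamma_conv_sort_key simp del: upt_Suc)

lemma is_perm_gamma: "is_perm (gamma x)"
  by (simp add: is_perm_def set_gamma distinct_gamma)

lemma strict_sorted_gamma_key: "sorted_wrt (<) (map (gamma_key x) (gamma x))"
proof -
  have "sorted (map (gamma_key x) (gamma x))"
    by (simp add: gamma_conv_sort_key del: upt_Suc)
  moreover have "distinct (map (gamma_key x) (gamma x))"
    using distinct_gamma inj_on_gamma_key by (simp add: distinct_map)
  ultimately show ?thesis
    by (simp add: strict_sorted_iff)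
qed

lemma gamma_eq_iff:
  "gamma x = p \<longleftrightarrow> distinct p \<and> set p = {1..length x} \<and> sorted_wrt (<) (map (gamma_key x) p)"
proof
  assume "gamma x = p"
  then show "distinct p \<and> set p = {1..length x} \<and> sorted_wrt (<) (map (gamma_key x) p)"
    using distinct_gamma set_gamma strict_sorted_gamma_key by blast
next
  assume p: "distinct p \<and> set p = {1..length x} \<and> sorted_wrt (<) (map (gamma_key x) p)"
  then have "mset [1..<Suc (length x)] = mset p"
    using set_eq_iff_mset_eq_distinct[of "[1..<Suc (length x)]" p]
    by (simp add: atLeastLessThanSuc_atLeastAtMost del: upt_Suc)
  moreover have "sorted (map (gamma_key x) p)"
    using p strict_sorted_imp_sorted by blast
  ultimately show "gamma x = p"
    unfolding gamma_conv_sort_key by (rule sort_key_inj_key_eq[OF _ inj_on_gamma_key])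
qed

section \<open>Inverse permutations\<close>

lemma is_perm_nth:
  assumes "is_perm p" "a < length p"
  shows "p ! a \<in> {1..length p}"
  using assms nth_mem unfolding is_perm_def by blast

lemma length_perm_inv [simp]: "length (perm_inv p) = length p"
  by (simp add: perm_inv_def del: upt_Suc)

lemma perm_inv_nth:
  assumes "is_perm p" "i < length p"
  shows "perm_inv p ! i \<in> {1..length p}" and "p ! (perm_inv p ! i - 1) = Suc i"
proof -
  define k where "k = (THE k. k < length p \<and> p ! k = Suc i)"
  have "\<exists>!k. k < length p \<and> p ! k = Suc i"
    using assms by (intro distinct_Ex1) (auto simp: is_perm_def)
  then have "k < length p \<and> p ! k = Suc i"
    unfolding k_def by (rule theI')
  moreover have "perm_inv p ! i = Suc k"
    using assms(2) by (simp add: perm_inv_def k_def del: upt_Suc)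
  ultimately show "perm_inv p ! i \<in> {1..length p}" and "p ! (perm_inv p ! i - 1) = Suc i"
    by auto
qed

lemma perm_inv_nth_nth:
  assumes "is_perm p" "a < length p"
  shows "perm_inv p ! (p ! a - 1) = Suc a"
proof -
  have "p ! a - 1 < length p"
    using is_perm_nth[OF assms] by auto
  then have "perm_inv p ! (p ! a - 1) = Suc (THE k. k < length p \<and> p ! k = p ! a)"
    using is_perm_nth[OF assms] by (simp add: perm_inv_def del: upt_Suc)
  also have "(THE k. k < length p \<and> p ! k = p ! a) = a"
    using assms by (auto simp: is_perm_def nth_eq_iff_index_eq)
  finally show ?thesis .
qed

lemma is_perm_perm_inv:
  assumes "is_perm p"
  shows "is_perm (perm_inv p)"
proof -
  have "map (\<lambda>j. p ! (j - 1)) (perm_inv p) = [1..<Suc (length p)]"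
    using perm_inv_nth(2)[OF assms] by (intro nth_equalityI) (simp_all del: upt_Suc)
  then have "distinct (perm_inv p)"
    by (metis distinct_map distinct_upt)
  moreover have "set (perm_inv p) \<subseteq> {1..length p}"
    using perm_inv_nth(1)[OF assms] by (auto simp: in_set_conv_nth)
  ultimately show ?thesis
    by (simp add: is_perm_def card_subset_eq distinct_card)
qed

lemma gamma_perm_inv:
  assumes "is_perm p"
  shows "gamma (perm_inv p) = p"
proof -
  have "map (gamma_key (perm_inv p)) p = map (\<lambda>a. (Suc a, - int (p ! a))) [0..<length p]"
    using perm_inv_nth_nth[OF assms] by (intro nth_equalityI) (simp_all add: gamma_key_def)
  then have "sorted_wrt (<) (map (gamma_key (perm_inv p)) p)"
    by (simp add: sorted_wrt_iff_nth_less)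
  with assms show ?thesis
    by (simp add: gamma_eq_iff is_perm_def)
qed

lemma gamma_perm:
  assumes "is_perm p"
  shows "gamma p = perm_inv p"
proof -
  have "map (gamma_key p) (perm_inv p) = map (\<lambda>i. (Suc i, - int (perm_inv p ! i))) [0..<length p]"
    using perm_inv_nth(2)[OF assms] by (intro nth_equalityI) (simp_all add: gamma_key_def)
  then have "sorted_wrt (<) (map (gamma_key p) (perm_inv p))"
    by (simp add: sorted_wrt_iff_nth_less)
  with is_perm_perm_inv[OF assms] show ?thesis
    by (simp add: gamma_eq_iff is_perm_def)
qed

section \<open>Containment\<close>

lemma perm_inv_gamma_less_iff:
  assumes "i < length x" "j < length x"
  shows "perm_inv (gamma x) ! i < perm_inv (gamma x) ! j \<longleftrightarrow> gamma_key x (Suc i) < gamma_key x (Suc j)"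
proof -
  let ?r = "\<lambda>i. perm_inv (gamma x) ! i - 1"
  have r: "?r i < length x \<and> gamma x ! ?r i = Suc i \<and> perm_inv (gamma x) ! i \<ge> 1" if "i < length x" for i
    using perm_inv_nth[OF is_perm_gamma, of i x] that by auto
  have "gamma_key x (Suc i) < gamma_key x (Suc j) \<longleftrightarrow> ?r i < ?r j"
    using strict_sorted_nth_less_iff[OF strict_sorted_gamma_key, of "?r i" x "?r j"] r assms by simp
  also have "\<dots> \<longleftrightarrow> perm_inv (gamma x) ! i < perm_inv (gamma x) ! j"
    using r[OF assms(1)] r[OF assms(2)] by linarith
  finally show ?thesis ..
qed

definition occurs_at :: "nat list \<Rightarrow> nat list \<Rightarrow> nat list \<Rightarrow> bool" where
  "occurs_at x y is \<longleftrightarrow> length is = length y \<and> sorted_wrt (<) is \<and> (\<forall>i\<in>set is. i < length x) \<and>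
     (\<forall>s<length y. \<forall>t<length y.
        (x ! (is ! s) < x ! (is ! t) \<longleftrightarrow> y ! s < y ! t) \<and>
        (x ! (is ! s) = x ! (is ! t) \<longleftrightarrow> y ! s = y ! t))"

lemma contains_iff_occurs_at: "contains x y \<longleftrightarrow> (\<exists>is. occurs_at x y is)"
  by (simp add: contains_def occurs_at_def)

lemma occurs_at_gamma_key_less_iff:
  assumes "occurs_at x y is" "s < length y" "t < length y"
  shows "gamma_key x (Suc (is ! s)) < gamma_key x (Suc (is ! t)) \<longleftrightarrow> gamma_key y (Suc s) < gamma_key y (Suc t)"
proof -
  have "length is = length y" "sorted_wrt (<) is"
    and "\<forall>s<length y. \<forall>t<length y.
        (x ! (is ! s) < x ! (is ! t) \<longleftrightarrow> y ! s < y ! t) \<and> (x ! (is ! s) = x ! (is ! t) \<longleftrightarrow> y ! s = y ! t)"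
    using assms(1) unfolding occurs_at_def by blast+
  with assms(2,3) strict_sorted_nth_less_iff[of "is" t s] show ?thesis
    by (simp add: gamma_key_less_iff)
qed

text \<open>The \<open>a\<close>-th letter of \<open>gamma y\<close> is a position of \<open>y\<close>; the witness sends it along
  \<open>is\<close> to a position of \<open>x\<close> and takes the index of that position in \<open>gamma x\<close>.\<close>

lemma occurs_at_gamma:
  assumes occ: "occurs_at x y is"
  shows "occurs_at (gamma x) (gamma y)
           (map (\<lambda>a. perm_inv (gamma x) ! (is ! (gamma y ! a - 1)) - 1) [0..<length y])"
    (is "occurs_at ?\<pi> ?\<rho> ?js")
proof -
  let ?e = "\<lambda>a. is ! (?\<rho> ! a - 1)"
  have len: "length is = length y" and strict: "sorted_wrt (<) is"
    and bound: "\<forall>i\<in>set is. i < length x"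
    using occ by (auto simp: occurs_at_def)
  have \<rho>: "?\<rho> ! a - 1 < length y \<and> Suc (?\<rho> ! a - 1) = ?\<rho> ! a" if "a < length y" for a
    using is_perm_nth[OF is_perm_gamma, of a y] that by auto
  have e: "?e a < length x" if "a < length y" for a
    using bound \<rho>[OF that] len by simp
  have js: "?js ! a = perm_inv ?\<pi> ! ?e a - 1 \<and> perm_inv ?\<pi> ! ?e a \<ge> 1 \<and>
      ?js ! a < length x \<and> ?\<pi> ! (?js ! a) = Suc (?e a)"
    if "a < length y" for a
    using perm_inv_nth[OF is_perm_gamma, of "?e a" x] e[OF that] that by auto
  have "sorted_wrt (<) ?js"
  proof (unfold sorted_wrt_iff_nth_less, intro allI impI)
    fix a b assume "a < b" "b < length ?js"
    then have ab: "a < length y" "b < length y" "a < b" by auto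
    have "gamma_key y (?\<rho> ! a) < gamma_key y (?\<rho> ! b)"
      using strict_sorted_nth_less_iff[OF strict_sorted_gamma_key, of a y b] ab by simp
    then have "gamma_key x (Suc (?e a)) < gamma_key x (Suc (?e b))"
      using occurs_at_gamma_key_less_iff[OF occ, of "?\<rho> ! a - 1" "?\<rho> ! b - 1"] \<rho>[OF ab(1)] \<rho>[OF ab(2)]
      by simp
    then have "perm_inv ?\<pi> ! ?e a < perm_inv ?\<pi> ! ?e b"
      using perm_inv_gamma_less_iff e ab by blast
    then show "?js ! a < ?js ! b"
      using js[OF ab(1)] js[OF ab(2)] by linarith
  qed
  moreover have "(?\<pi> ! (?js ! a) < ?\<pi> ! (?js ! b) \<longleftrightarrow> ?\<rho> ! a < ?\<rho> ! b) \<and>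
      (?\<pi> ! (?js ! a) = ?\<pi> ! (?js ! b) \<longleftrightarrow> ?\<rho> ! a = ?\<rho> ! b)"
    if ab: "a < length y" "b < length y" for a b
  proof -
    have "?e a < ?e b \<longleftrightarrow> ?\<rho> ! a - 1 < ?\<rho> ! b - 1"
      using strict_sorted_nth_less_iff[OF strict] \<rho> ab len by simp
    moreover have "?e a = ?e b \<longleftrightarrow> ?\<rho> ! a - 1 = ?\<rho> ! b - 1"
      using strict \<rho> ab len by (simp add: strict_sorted_iff nth_eq_iff_index_eq)
    moreover have "?\<pi> ! (?js ! a) = Suc (?e a)" "?\<pi> ! (?js ! b) = Suc (?e b)"
      using js ab by blast+
    ultimately show ?thesis
      using \<rho>[OF ab(1)] \<rho>[OF ab(2)] by (simp only:) linarith
  qed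
  moreover have "\<forall>j\<in>set ?js. j < length ?\<pi>"
    using js by (auto simp: in_set_conv_nth)
  ultimately show ?thesis
    by (simp add: occurs_at_def)
qed

lemma contains_gamma: "contains x y \<Longrightarrow> contains (gamma x) (gamma y)"
  using occurs_at_gamma by (meson contains_iff_occurs_at)

section \<open>Weakly increasing Cayley words\<close>

definition plateaus :: "nat list \<Rightarrow> nat set" where
  "plateaus v = {i. Suc i < length v \<and> v ! i = v ! Suc i}"

definition stair :: "nat set \<Rightarrow> nat \<Rightarrow> nat" where
  "stair S j = Suc (card ({..<j} - S))"

lemma stair_0 [simp]: "stair S 0 = 1"
  by (simp add: stair_def)

lemma stair_Suc: "stair S (Suc j) = (if j \<in> S then stair S j else Suc (stair S j))"
proof -
  have "{..<Suc j} - S = (if j \<in> S then {..<j} - S else insert j ({..<j} - S))"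
    by (auto simp: less_Suc_eq)
  then show ?thesis
    by (simp add: stair_def)
qed

lemma mono_stair: "mono (stair S)"
  by (auto intro!: monoI card_mono simp: stair_def)

lemma stair_image: "stair S ` {..<Suc m} = {1..stair S m}"
proof (induction m)
  case 0
  then show ?case by (simp add: lessThan_Suc)
next
  case (Suc m)
  have "stair S ` {..<Suc (Suc m)} = insert (stair S (Suc m)) {1..stair S m}"
    by (simp only: lessThan_Suc[of "Suc m"] image_insert Suc.IH)
  also have "\<dots> = {1..stair S (Suc m)}"
    using monoD[OF mono_stair, of 0 m S] by (auto simp: stair_Suc)
  finally show ?case .
qed

lemma sorted_stairs: "sorted (map (stair S) [0..<n])"
  by (simp add: sorted_iff_nth_mono monoD[OF mono_stair])

lemma set_stairs: "\<exists>m. set (map (stair S) [0..<n]) = {1..m}"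
proof (cases n)
  case (Suc m)
  then have "set (map (stair S) [0..<n]) = {1..stair S m}"
    by (simp add: stair_image atLeast0LessThan del: upt_Suc)
  then show ?thesis ..
qed (intro exI[of _ 0], simp)

lemma plateaus_stairs: "plateaus (map (stair S) [0..<n]) = {i \<in> S. Suc i < n}"
  by (auto simp: plateaus_def stair_Suc simp del: upt_Suc split: if_splits)

lemma sorted_interval_nth_0:
  assumes "sorted v" "set v = {1..m}" "v \<noteq> []"
  shows "v ! 0 = 1"
proof -
  have "set v \<noteq> {}"
    using assms(3) by simp
  then have "1 \<in> set v"
    using assms(2) by auto
  then obtain b where "b < length v" "v ! b = 1"
    by (auto simp: in_set_conv_nth)
  moreover have "v ! 0 \<in> {1..m}"
    using assms by (metis length_greater_0_conv nth_mem)
  ultimately show ?thesis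
    using sorted_nth_mono[OF assms(1), of 0 b] by simp
qed

lemma sorted_interval_nth_Suc_le:
  assumes "sorted v" "set v = {1..m}" "Suc j < length v"
  shows "v ! Suc j \<le> Suc (v ! j)"
proof (rule ccontr)
  assume gap: "\<not> ?thesis"
  have "v ! Suc j \<in> {1..m}"
    using assms nth_mem by blast
  with gap have "Suc (v ! j) \<in> set v"
    using assms(2) by auto
  then obtain b where b: "b < length v" "v ! b = Suc (v ! j)"
    by (auto simp: in_set_conv_nth)
  show False
  proof (cases "b \<le> j")
    case True
    then show ?thesis using sorted_nth_mono[OF assms(1), of b j] b assms(3) by simp
  next
    case False
    then show ?thesis using sorted_nth_mono[OF assms(1), of "Suc j" b] b gap by simp
  qed
qed

lemma stairs_plateaus:
  assumes "sorted v" "set v = {1..m}"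
  shows "map (stair (plateaus v)) [0..<length v] = v"
proof (rule nth_equalityI)
  fix j assume "j < length (map (stair (plateaus v)) [0..<length v])"
  then have "j < length v" by simp
  then show "map (stair (plateaus v)) [0..<length v] ! j = v ! j"
  proof (induction j)
    case 0
    then show ?case using sorted_interval_nth_0[OF assms] by auto
  next
    case (Suc j)
    then have "v ! j \<le> v ! Suc j" "v ! Suc j \<le> Suc (v ! j)"
      using sorted_nth_mono[OF assms(1)] sorted_interval_nth_Suc_le[OF assms] by auto
    with Suc show ?case
      by (auto simp: stair_Suc plateaus_def simp del: upt_Suc)
  qed
qed simp

definition sorted_Cay :: "nat \<Rightarrow> nat set \<Rightarrow> nat list set" where
  "sorted_Cay n D = {v \<in> Cay n. sorted v \<and> plateaus v \<subseteq> D}"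

lemma card_sorted_Cay:
  assumes "D \<subseteq> {i. Suc i < n}"
  shows "card (sorted_Cay n D) = 2 ^ card D"
proof -
  have "bij_betw (\<lambda>S. map (stair S) [0..<n]) (Pow D) (sorted_Cay n D)"
  proof (rule bij_betw_byWitness[where f' = plateaus])
    show "\<forall>S\<in>Pow D. plateaus (map (stair S) [0..<n]) = S"
      using assms by (auto simp: plateaus_stairs)
    show "\<forall>v\<in>sorted_Cay n D. map (stair (plateaus v)) [0..<n] = v"
      using stairs_plateaus by (auto simp: sorted_Cay_def Cay_def)
    show "(\<lambda>S. map (stair S) [0..<n]) ` Pow D \<subseteq> sorted_Cay n D"
      using assms sorted_stairs set_stairs
      by (auto simp: sorted_Cay_def Cay_def plateaus_stairs simp del: set_map)
    show "plateaus ` sorted_Cay n D \<subseteq> Pow D"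
      by (auto simp: sorted_Cay_def)
  qed
  moreover have "finite D"
    using assms by (rule finite_subset) (auto intro: finite_subset[of _ "{..<n}"])
  ultimately show ?thesis
    by (metis bij_betw_same_card card_Pow)
qed

section \<open>Fibres of gamma\<close>

definition compose_perm :: "nat list \<Rightarrow> nat list \<Rightarrow> nat list" where
  "compose_perm y p = map (\<lambda>j. y ! (j - 1)) p"

lemma length_compose_perm [simp]: "length (compose_perm y p) = length p"
  by (simp add: compose_perm_def)

lemma nth_compose_perm [simp]: "a < length p \<Longrightarrow> compose_perm y p ! a = y ! (p ! a - 1)"
  by (simp add: compose_perm_def)

lemma compose_perm_perm_inv_perm:
  assumes "is_perm p" "length v = length p"
  shows "compose_perm (compose_perm v (perm_inv p)) p = v"
proof (rule nth_equalityI)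
  fix a assume "a < length (compose_perm (compose_perm v (perm_inv p)) p)"
  then have a: "a < length p"
    by simp
  then have "p ! a - 1 < length p"
    using is_perm_nth[OF assms(1) a] by auto
  then show "compose_perm (compose_perm v (perm_inv p)) p ! a = v ! a"
    using a perm_inv_nth_nth[OF assms(1) a] by simp
qed (simp add: assms)

lemma compose_perm_perm_perm_inv:
  assumes "is_perm p" "length y = length p"
  shows "compose_perm (compose_perm y p) (perm_inv p) = y"
proof (rule nth_equalityI)
  fix i assume "i < length (compose_perm (compose_perm y p) (perm_inv p))"
  then have i: "i < length p"
    by simp
  then have "perm_inv p ! i - 1 < length p"
    using perm_inv_nth(1)[OF assms(1) i] by auto
  then show "compose_perm (compose_perm y p) (perm_inv p) ! i = y ! i"
    using i perm_inv_nth(2)[OF assms(1) i] by simp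
qed (simp add: assms)

lemma set_compose_perm:
  assumes "is_perm p" "length y = length p"
  shows "set (compose_perm y p) = set y"
proof -
  have "set (compose_perm y p) = (\<lambda>j. y ! (j - 1)) ` Suc ` {..<length y}"
    using assms by (simp only: compose_perm_def is_perm_def set_map image_Suc_lessThan)
  also have "\<dots> = set y"
    unfolding image_image by (auto simp: set_conv_nth)
  finally show ?thesis .
qed

definition descents :: "nat list \<Rightarrow> nat set" where
  "descents p = {i. Suc i < length p \<and> p ! Suc i < p ! i}"

lemma gamma_eq_iff_compose_perm:
  assumes "is_perm p" "length y = length p"
  shows "gamma y = p \<longleftrightarrow> sorted (compose_perm y p) \<and> plateaus (compose_perm y p) \<subseteq> descents p"
proof -
  have "gamma y = p \<longleftrightarrow> sorted_wrt (<) (map (gamma_key y) p)"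
    using assms by (simp add: gamma_eq_iff is_perm_def)
  also have "\<dots> \<longleftrightarrow> (\<forall>a. Suc a < length p \<longrightarrow> gamma_key y (p ! a) < gamma_key y (p ! Suc a))"
    by (simp add: sorted_wrt_iff_nth_Suc_transp)
  also have "\<dots> \<longleftrightarrow> (\<forall>a. Suc a < length p \<longrightarrow> y ! (p ! a - 1) \<le> y ! (p ! Suc a - 1)) \<and>
      (\<forall>a. Suc a < length p \<longrightarrow> y ! (p ! a - 1) = y ! (p ! Suc a - 1) \<longrightarrow> p ! Suc a < p ! a)"
    by (auto simp: gamma_key_less_iff le_less)
  also have "\<dots> \<longleftrightarrow> sorted (compose_perm y p) \<and> plateaus (compose_perm y p) \<subseteq> descents p"
    by (auto simp: sorted_iff_nth_Suc plateaus_def descents_def)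
  finally show ?thesis .
qed

definition gamma_fibre :: "nat list \<Rightarrow> nat list set" where
  "gamma_fibre p = {y. (\<exists>m. set y = {1..m}) \<and> gamma y = p}"

lemma cay_class_eq_gamma_fibre: "cay_class y = gamma_fibre (gamma y)"
  by (simp add: cay_class_def gamma_fibre_def)

lemma bij_betw_gamma_fibre_sorted_Cay:
  assumes "is_perm p"
  shows "bij_betw (\<lambda>y. compose_perm y p) (gamma_fibre p) (sorted_Cay (length p) (descents p))"
proof (rule bij_betw_byWitness[where f' = "\<lambda>v. compose_perm v (perm_inv p)"])
  show "\<forall>y\<in>gamma_fibre p. compose_perm (compose_perm y p) (perm_inv p) = y"
    using assms compose_perm_perm_perm_inv by (auto simp: gamma_fibre_def)
  show "\<forall>v\<in>sorted_Cay (length p) (descents p). compose_perm (compose_perm v (perm_inv p)) p = v"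
    using assms compose_perm_perm_inv_perm by (auto simp: sorted_Cay_def Cay_def)
  show "(\<lambda>y. compose_perm y p) ` gamma_fibre p \<subseteq> sorted_Cay (length p) (descents p)"
    using assms gamma_eq_iff_compose_perm set_compose_perm
    by (fastforce simp: gamma_fibre_def sorted_Cay_def Cay_def)
  show "(\<lambda>v. compose_perm v (perm_inv p)) ` sorted_Cay (length p) (descents p) \<subseteq> gamma_fibre p"
  proof clarify
    fix v assume "v \<in> sorted_Cay (length p) (descents p)"
    then have v: "length v = length p" "sorted v" "plateaus v \<subseteq> descents p" "\<exists>m. set v = {1..m}"
      by (auto simp: sorted_Cay_def Cay_def)
    let ?y = "compose_perm v (perm_inv p)"
    have y: "length ?y = length p" "compose_perm ?y p = v"
      using compose_perm_perm_inv_perm[OF assms v(1)] by simp_all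
    then show "?y \<in> gamma_fibre p"
      using v gamma_eq_iff_compose_perm[OF assms y(1)] set_compose_perm[OF assms y(1)]
      by (auto simp: gamma_fibre_def)
  qed
qed

lemma card_gamma_fibre:
  assumes "is_perm p"
  shows "card (gamma_fibre p) = 2 ^ des p"
proof -
  have "card (gamma_fibre p) = card (sorted_Cay (length p) (descents p))"
    using bij_betw_gamma_fibre_sorted_Cay[OF assms] by (rule bij_betw_same_card)
  also have "\<dots> = 2 ^ card (descents p)"
    by (rule card_sorted_Cay) (auto simp: descents_def)
  finally show ?thesis
    by (simp add: des_def descents_def)
qed

lemma perm_inv_in_gamma_fibre:
  assumes "is_perm p"
  shows "perm_inv p \<in> gamma_fibre p"
  using is_perm_perm_inv[OF assms] gamma_perm_inv[OF assms] by (auto simp: gamma_fibre_def is_perm_def)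

lemma class_geq_gamma_fibre_iff:
  assumes "is_perm p" "is_perm \<sigma>"
  shows "class_geq (gamma_fibre p) (gamma_fibre \<sigma>) \<longleftrightarrow> contains p \<sigma>"
proof
  assume "class_geq (gamma_fibre p) (gamma_fibre \<sigma>)"
  then obtain x y where "gamma x = p" "gamma y = \<sigma>" "contains x y"
    by (auto simp: class_geq_def gamma_fibre_def)
  then show "contains p \<sigma>"
    using contains_gamma by blast
next
  assume "contains p \<sigma>"
  then have "contains (perm_inv p) (perm_inv \<sigma>)"
    using contains_gamma[of p \<sigma>] gamma_perm assms by simp
  then show "class_geq (gamma_fibre p) (gamma_fibre \<sigma>)"
    using perm_inv_in_gamma_fibre assms by (auto simp: class_geq_def)
qed

lemma Perms_eq: "Perms n = {p. is_perm p \<and> length p = n}"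
  unfolding Perms_def is_perm_def by (metis (lifting) card_atLeastAtMost diff_Suc_1 distinct_card)

lemma gamma_image_Cay: "gamma ` Cay n = Perms n"
proof
  show "gamma ` Cay n \<subseteq> Perms n"
    by (auto simp: Perms_eq Cay_def is_perm_gamma)
  show "Perms n \<subseteq> gamma ` Cay n"
  proof
    fix p assume "p \<in> Perms n"
    then have p: "is_perm p" "length p = n"
      by (auto simp: Perms_eq)
    then have "perm_inv p \<in> Cay n"
      using is_perm_perm_inv by (auto simp: Cay_def is_perm_def)
    then show "p \<in> gamma ` Cay n"
      using gamma_perm_inv[OF p(1)] by force
  qed
qed

lemma Cay_classes_avoiding_eq:
  assumes "is_perm \<sigma>"
  shows "Cay_classes_avoiding n (perm_inv \<sigma>) = gamma_fibre ` Av n \<sigma>"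
proof -
  let ?avoids = "\<lambda>p. \<not> class_geq (gamma_fibre p) (gamma_fibre \<sigma>)"
  have "Cay_classes_avoiding n (perm_inv \<sigma>) = gamma_fibre ` gamma ` {y \<in> Cay n. ?avoids (gamma y)}"
    unfolding Cay_classes_avoiding_def cay_class_eq_gamma_fibre gamma_perm_inv[OF assms] by blast
  also have "gamma ` {y \<in> Cay n. ?avoids (gamma y)} = {p \<in> Perms n. ?avoids p}"
    unfolding gamma_image_Cay[symmetric] by blast
  also have "\<dots> = Av n \<sigma>"
    using class_geq_gamma_fibre_iff[OF _ assms] by (auto simp: Av_def Perms_eq)
  finally show ?thesis .
qed

lemma inj_on_gamma_fibre: "inj_on gamma_fibre {p. is_perm p}"
proof (rule inj_onI)
  fix p q assume "p \<in> {p. is_perm p}" and "gamma_fibre p = gamma_fibre q"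
  then have "perm_inv p \<in> gamma_fibre q" and "gamma (perm_inv p) = p"
    using perm_inv_in_gamma_fibre gamma_perm_inv by auto
  then show "p = q"
    by (simp add: gamma_fibre_def)
qed

theorem corollary4p12:
  fixes n :: nat and \<sigma> :: "nat list"
  assumes "is_perm \<sigma>"
  shows "(\<Sum>\<pi>\<in>Av n \<sigma>. [:0, 1:] ^ des \<pi> :: int poly)
       = (\<Sum>C\<in>Cay_classes_avoiding n (perm_inv \<sigma>). [:0, 1:] ^ nat \<lfloor>log 2 (real (card C))\<rfloor>)"
proof -
  have perms: "Av n \<sigma> \<subseteq> {p. is_perm p}"
    by (auto simp: Av_def Perms_eq)
  have "(\<Sum>C\<in>Cay_classes_avoiding n (perm_inv \<sigma>). ([:0, 1:] :: int poly) ^ nat \<lfloor>log 2 (real (card C))\<rfloor>)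
      = (\<Sum>\<pi>\<in>Av n \<sigma>. [:0, 1:] ^ nat \<lfloor>log 2 (real (card (gamma_fibre \<pi>)))\<rfloor>)"
    unfolding Cay_classes_avoiding_eq[OF assms]
    by (rule sum.reindex[OF inj_on_subset[OF inj_on_gamma_fibre perms], unfolded comp_def])
  also have "\<dots> = (\<Sum>\<pi>\<in>Av n \<sigma>. [:0, 1:] ^ des \<pi>)"
    using perms by (intro sum.cong) (auto simp: card_gamma_fibre)
  finally show ?thesis ..
qed

end
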